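(* (Convolution lemma.) Let $x_0,\dots,x_q$ be complex numbers (repetitions allowed), $q\ge1$, let $0\le j\le q-1$, and let $\beta>0$. Then $$\int_0^\beta e^{-\tau[x_{j+1},\ldots,x_q]}\,e^{-(\beta-\tau)[x_0,\ldots,x_j]}\,\mathrm{d}\tau=-e^{-\beta[x_0,\ldots,x_q]}.$$
   Context: For $t\in\mathbb{R}$ and numbers $y_0,\dots,y_p$ (repetitions allowed), $e^{t[y_0,\ldots,y_p]}$ denotes the divided difference of $f(x)=e^{tx}$ at $y_0,\dots,y_p$, defined by $f[y_0,\ldots,y_p]=\frac{1}{2\pi i}\oint_\Gamma\frac{f(x)}{\prod_{i=0}^p(x-y_i)}\,\mathrm{d}x$ with $\Gamma$ a positively oriented contour enclosing all $y_i$. Thus $e^{-\tau[\cdots]}$ is the divided difference of $x\mapsto e^{-\tau x}$. *)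

theory Defs
  imports "HOL-Complex_Analysis.Complex_Analysis"
begin

text \<open>Divided difference of f at the nodes ys (repetitions allowed), defined by the
contour integral (1/(2 pi i)) of f(x) / prod (x - y_i) over a positively oriented
circle enclosing all nodes; we take the circle centred at 0 of radius
1 + sum of the moduli of the nodes.\<close>
definition divdiff :: "(complex \<Rightarrow> complex) \<Rightarrow> complex list \<Rightarrow> complex" where
  "divdiff f ys =
     contour_integral (circlepath 0 (1 + (\<Sum>y\<leftarrow>ys. norm y)))
       (\<lambda>x. f x / (\<Prod>y\<leftarrow>ys. (x - y))) / (2 * of_real pi * \<i>)"

text \<open>e^{t[ys]}: divided difference of x \<mapsto> e^{t x}.\<close>
definition exp_dd :: "real \<Rightarrow> complex list \<Rightarrow> complex" where
  "exp_dd t ys = divdiff (\<lambda>x. exp (of_real t * x)) ys"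

end

theory Submission
  imports Defs
begin

text \<open>
  Both divided differences are circle integrals of \<open>e^(t z) / \<omega>(z)\<close>, \<open>\<omega>\<close> the node polynomial:
  the one in \<open>\<tau>\<close>, with nodes \<open>x\<^sub>j\<^sub>+\<^sub>1, ..., x\<^sub>q\<close> and node polynomial \<open>\<omega>\<^sub>A\<close>, over a circle \<open>|z| = r\<close>;
  the one in \<open>\<beta> - \<tau>\<close>, with nodes \<open>x\<^sub>0, ..., x\<^sub>j\<close> and node polynomial \<open>\<omega>\<^sub>B\<close>, over a smaller circle
  \<open>|w| = s\<close>. After exchanging the order of integration the \<open>\<tau>\<close>-integral is elementary,
  \<open>\<integral>\<^sub>0\<^sup>\<beta> e^(-\<tau> z) e^(-(\<beta> - \<tau>) w) d\<tau> = (e^(-\<beta> w) - e^(-\<beta> z)) / (z - w)\<close>.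
  The \<open>e^(-\<beta> w)\<close> part vanishes: its \<open>z\<close>-integral is the integral of the reciprocal of the
  polynomial \<open>(z - w) \<omega>\<^sub>A(z)\<close> of degree at least 2 over a circle enclosing all its zeros, which is 0.
  In the \<open>e^(-\<beta> z)\<close> part \<open>z\<close> lies outside the inner circle, so the \<open>w\<close>-integral of
  \<open>1 / ((z - w) \<omega>\<^sub>B(w))\<close> is \<open>2\<pi>i / \<omega>\<^sub>B(z)\<close>; as \<open>\<omega>\<^sub>B \<omega>\<^sub>A\<close> is the node polynomial of
  \<open>x\<^sub>0, ..., x\<^sub>q\<close>, what remains is \<open>-e^(-\<beta>[x\<^sub>0, ..., x\<^sub>q])\<close>.
\<close>

section \<open>Node polynomials and circle integrals\<close>

definition node_poly :: "complex list \<Rightarrow> complex \<Rightarrow> complex" where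
  "node_poly ys z = (\<Prod>y\<leftarrow>ys. z - y)"

lemma node_poly_Nil [simp]: "node_poly [] z = 1"
  by (simp add: node_poly_def)

lemma node_poly_Cons [simp]: "node_poly (y # ys) z = (z - y) * node_poly ys z"
  by (simp add: node_poly_def)

lemma node_poly_append: "node_poly (ys @ zs) z = node_poly ys z * node_poly zs z"
  by (simp add: node_poly_def)

lemma node_poly_eq_0_iff [simp]: "node_poly ys z = 0 \<longleftrightarrow> z \<in> set ys"
  by (induction ys) auto

lemma holomorphic_on_node_poly [holomorphic_intros]:
  "g holomorphic_on S \<Longrightarrow> (\<lambda>z. node_poly ys (g z)) holomorphic_on S"
  by (induction ys) (auto intro!: holomorphic_intros)

lemma continuous_on_node_poly [continuous_intros]:
  "continuous_on S g \<Longrightarrow> continuous_on S (\<lambda>z. node_poly ys (g z))"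
  by (induction ys) (auto intro!: continuous_intros)

lemma norm_node_poly_ge:
  assumes "\<forall>y\<in>set ys. a \<le> norm (z - y)" "0 \<le> a"
  shows "a ^ length ys \<le> norm (node_poly ys z)"
  using assms by (induction ys) (auto simp: norm_mult intro!: mult_mono)

lemma contour_integral_circlepath_eq_sum_residues:
  assumes "finite s" "f holomorphic_on (UNIV - s)" "0 < r" "\<forall>p\<in>s. norm p \<noteq> r"
  shows "contour_integral (circlepath 0 r) f = 2 * pi * \<i> * (\<Sum>p\<in>{p\<in>s. norm p < r}. residue f p)"
proof -
  have image: "path_image (circlepath 0 r) = sphere 0 r"
    using assms(3) by simp
  have "contour_integral (circlepath 0 r) f =
          2 * pi * \<i> * (\<Sum>p\<in>s. winding_number (circlepath 0 r) p * residue f p)"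
    by (rule Residue_theorem[of UNIV]) (use assms image in auto)
  also have "(\<Sum>p\<in>s. winding_number (circlepath 0 r) p * residue f p) =
               (\<Sum>p\<in>s. if norm p < r then residue f p else 0)"
  proof (rule sum.cong)
    fix p assume "p \<in> s"
    then have "r < norm p" if "\<not> norm p < r"
      using assms(4) that by force
    then have "winding_number (circlepath 0 r) p = (if norm p < r then 1 else 0)"
      using image by (auto simp: winding_number_circlepath intro!: winding_number_zero_outside[of _ "cball 0 r"])
    then show "winding_number (circlepath 0 r) p * residue f p = (if norm p < r then residue f p else 0)"
      by simp
  qed simp
  finally show ?thesis
    by (simp add: sum.inter_filter[OF assms(1)])
qed

lemma contour_integral_circlepath_radius_cong:
  assumes "finite s" "f holomorphic_on (UNIV - s)" "\<forall>p\<in>s. norm p < r" "\<forall>p\<in>s. norm p < r'"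
    "0 < r" "0 < r'"
  shows "contour_integral (circlepath 0 r) f = contour_integral (circlepath 0 r') f"
proof -
  have "{p\<in>s. norm p < r} = s" "{p\<in>s. norm p < r'} = s" "\<forall>p\<in>s. norm p \<noteq> r" "\<forall>p\<in>s. norm p \<noteq> r'"
    using assms by auto
  with assms(5,6) show ?thesis
    by (simp add: contour_integral_circlepath_eq_sum_residues[OF assms(1,2)])
qed

lemma divdiff_eq_contour_integral_circlepath:
  assumes "f holomorphic_on UNIV" "\<forall>y\<in>set ys. norm y < r" "0 < r"
  shows "divdiff f ys = contour_integral (circlepath 0 r) (\<lambda>z. f z / node_poly ys z) / (2 * pi * \<i>)"
proof -
  define R where "R = 1 + (\<Sum>y\<leftarrow>ys. norm y)"
  have sum_nonneg: "0 \<le> (\<Sum>y\<leftarrow>us. norm y)" for us :: "complex list"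
    by (rule sum_list_nonneg) auto
  have "norm y \<le> (\<Sum>y\<leftarrow>ys. norm y)" if "y \<in> set ys" for y
    using that by (induction ys) (auto intro: add_increasing add_increasing2 sum_nonneg)
  then have "\<forall>y\<in>set ys. norm y < R" "0 < R"
    using sum_nonneg[of ys] unfolding R_def by force+
  moreover have "(\<lambda>z. f z / node_poly ys z) holomorphic_on (UNIV - set ys)"
    by (intro holomorphic_intros holomorphic_on_subset[OF assms(1)]) auto
  ultimately show ?thesis
    using assms contour_integral_circlepath_radius_cong[of "set ys" _ R r]
    by (simp add: divdiff_def node_poly_def R_def)
qed

lemma norm_inverse_node_poly_le:
  assumes "2 \<le> length ys" "\<forall>y\<in>set ys. norm y < r" "2 * r \<le> norm z" "2 \<le> norm z"
  shows "norm (1 / node_poly ys z) \<le> 4 / (norm z)\<^sup>2"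
proof -
  define R where "R = norm z"
  have "\<forall>y\<in>set ys. R / 2 \<le> norm (z - y)"
  proof
    fix y assume "y \<in> set ys"
    then show "R / 2 \<le> norm (z - y)"
      using assms(2,3) norm_triangle_ineq2[of z y] unfolding R_def by fastforce
  qed
  then have "(R / 2)\<^sup>2 \<le> norm (node_poly ys z)"
    using norm_node_poly_ge[of ys "R / 2" z] power_increasing[OF assms(1), of "R / 2"] assms(4)
    unfolding R_def by simp
  moreover have "0 < R"
    using assms(4) unfolding R_def by linarith
  then have "0 < (R / 2)\<^sup>2"
    by simp
  ultimately have "1 / norm (node_poly ys z) \<le> 1 / (R / 2)\<^sup>2"
    by (meson divide_left_mono mult_pos_pos less_le_trans zero_le_one)
  then show ?thesis
    by (simp add: R_def norm_divide power_divide)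
qed

text \<open>The integral does not depend on the radius, and on large circles it is \<open>O(1/R)\<close>.\<close>

lemma contour_integral_inverse_node_poly_eq_0:
  assumes "2 \<le> length ys" "\<forall>y\<in>set ys. norm y < r"
  shows "contour_integral (circlepath 0 r) (\<lambda>z. 1 / node_poly ys z) = 0"
proof -
  define c where "c = contour_integral (circlepath 0 r) (\<lambda>z. 1 / node_poly ys z)"
  obtain y where "y \<in> set ys"
    using assms(1) by (cases ys) auto
  with assms(2) have "0 < r"
    by (meson norm_ge_zero le_less_trans)
  have holo: "(\<lambda>z. 1 / node_poly ys z) holomorphic_on (UNIV - set ys)"
    by (intro holomorphic_intros) auto
  have "norm c \<le> 8 * pi / R" if R: "2 * r \<le> R" "2 \<le> R" for R
  proof -
    have "c = contour_integral (circlepath 0 R) (\<lambda>z. 1 / node_poly ys z)"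
      unfolding c_def using assms(2) R \<open>0 < r\<close>
      by (intro contour_integral_circlepath_radius_cong[OF _ holo]) auto
    moreover have "(\<lambda>z. 1 / node_poly ys z) contour_integrable_on (circlepath 0 R)"
      using assms(2) R by (intro contour_integrable_continuous_circlepath continuous_intros) force
    ultimately have "((\<lambda>z. 1 / node_poly ys z) has_contour_integral c) (circlepath 0 R)"
      by (simp add: has_contour_integral_integral)
    then have "norm c \<le> 4 / R\<^sup>2 * (2 * pi * R)"
      using R norm_inverse_node_poly_le[OF assms] by (intro has_contour_integral_bound_circlepath) auto
    then show ?thesis
      using R by (simp add: power2_eq_square)
  qed
  then have "\<forall>\<^sub>F R in at_top. norm c \<le> 8 * pi / R"
    using eventually_ge_at_top[of "max (2 * r) 2"] by (auto elim: eventually_mono)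
  moreover have "((\<lambda>R. 8 * pi / R) \<longlongrightarrow> 0) at_top"
    by (intro tendsto_divide_0[OF tendsto_const] filterlim_at_top_imp_at_infinity filterlim_ident)
  ultimately have "norm c \<le> 0"
    using tendsto_le[OF trivial_limit_at_top_linorder _ tendsto_const] by blast
  then show ?thesis
    by (simp add: c_def)
qed

lemma sum_residues_inverse_node_poly_eq_0:
  assumes "2 \<le> length ys"
  shows "(\<Sum>p\<in>set ys. residue (\<lambda>z. 1 / node_poly ys z) p) = 0"
proof -
  obtain r where r: "0 < r" "\<forall>y\<in>set ys. norm y < r"
    using bounded_pos_less[THEN iffD1, OF finite_imp_bounded[OF finite_set]] by blast
  then have "{p\<in>set ys. norm p < r} = set ys" "\<forall>p\<in>set ys. norm p \<noteq> r"
    by auto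
  moreover have "(\<lambda>z. 1 / node_poly ys z) holomorphic_on (UNIV - set ys)"
    by (intro holomorphic_intros) auto
  ultimately show ?thesis
    using contour_integral_inverse_node_poly_eq_0[OF assms r(2)] r(1)
      contour_integral_circlepath_eq_sum_residues[of "set ys" "\<lambda>z. 1 / node_poly ys z" r]
    by simp
qed

text \<open>The residues of \<open>1 / node_poly (z # ys)\<close> sum to 0, so those at the nodes of \<open>ys\<close> add up to
  minus the residue \<open>1 / node_poly ys z\<close> at \<open>z\<close>.\<close>

lemma contour_integral_circlepath_inverse_node_poly_outside:
  assumes "ys \<noteq> []" "\<forall>y\<in>set ys. norm y < r" "r < norm z"
  shows "contour_integral (circlepath 0 r) (\<lambda>w. 1 / ((z - w) * node_poly ys w)) =
           2 * pi * \<i> / node_poly ys z"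
proof -
  define h where "h = (\<lambda>w. 1 / node_poly (z # ys) w)"
  have "0 < r"
    using assms(1,2) by (cases ys) (auto intro: le_less_trans[OF norm_ge_zero])
  have z: "z \<notin> set ys"
    using assms(2,3) by force
  have "residue h z = 1 / node_poly ys z"
  proof -
    have "h = (\<lambda>w. (1 / node_poly ys w) / (w - z))"
      by (simp add: h_def fun_eq_iff)
    moreover have "residue (\<lambda>w. (1 / node_poly ys w) / (w - z)) z = 1 / node_poly ys z"
      by (rule residue_simple[of "UNIV - set ys"])
        (use z in \<open>auto simp: open_Diff finite_imp_closed intro!: holomorphic_intros\<close>)
    ultimately show ?thesis
      by (simp only:)
  qed
  moreover have "(\<Sum>p\<in>set (z # ys). residue h p) = 0"
    unfolding h_def using assms(1) by (intro sum_residues_inverse_node_poly_eq_0) (cases ys, auto)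
  ultimately have sum_h: "(\<Sum>p\<in>set ys. residue h p) = - 1 / node_poly ys z"
    using z by (simp add: add_eq_0_iff)
  have "h holomorphic_on (UNIV - set (z # ys))"
    unfolding h_def by (intro holomorphic_intros) auto
  moreover have "{p\<in>set (z # ys). norm p < r} = set ys" "\<forall>p\<in>set (z # ys). norm p \<noteq> r"
    using assms(2,3) by auto
  ultimately have "contour_integral (circlepath 0 r) h = 2 * pi * \<i> * (- 1 / node_poly ys z)"
    using contour_integral_circlepath_eq_sum_residues[of "set (z # ys)" h r] \<open>0 < r\<close> sum_h by simp
  moreover have "(\<lambda>w. 1 / ((z - w) * node_poly ys w)) = (\<lambda>w. - h w)"
    by (simp add: h_def fun_eq_iff divide_simps algebra_simps)
  ultimately show ?thesis
    by (simp add: contour_integral_neg)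
qed

lemma continuous_on_contour_integral_circlepath:
  fixes F :: "'a::topological_space \<Rightarrow> complex \<Rightarrow> complex"
  assumes "continuous_on (U \<times> sphere 0 r) (\<lambda>(x, z). F x z)" "0 < r"
  shows "continuous_on U (\<lambda>x. contour_integral (circlepath 0 r) (F x))"
proof -
  have eq: "contour_integral (circlepath 0 r) (F x) =
     integral (cbox 0 1) (\<lambda>t. F x (circlepath 0 r t) * (2 * pi * \<i> * r * exp (2 * of_real pi * \<i> * t)))" for x
    unfolding contour_integral_integral vector_derivative_circlepath by simp
  have image: "(\<lambda>p. (fst p, circlepath 0 r (snd p))) ` (U \<times> cbox 0 1) \<subseteq> U \<times> sphere 0 r"
    using assms(2) by (auto simp: circlepath norm_mult)
  have "continuous_on (U \<times> cbox 0 1) (\<lambda>p. (fst p, circlepath 0 r (snd p)))"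
    unfolding circlepath by (intro continuous_intros)
  from continuous_on_compose[OF this continuous_on_subset[OF assms(1) image]]
  have F_cont: "continuous_on (U \<times> cbox 0 1) (\<lambda>p. F (fst p) (circlepath 0 r (snd p)))"
    by (simp add: o_def)
  show ?thesis
    unfolding eq by (rule integral_continuous_on_param)
      (auto simp: split_beta intro!: continuous_intros F_cont[unfolded cbox_interval])
qed

lemma continuous_on_cauchy_kernel_spheres:
  fixes \<phi> :: "complex \<Rightarrow> complex"
  assumes "continuous_on (sphere 0 s) \<phi>" "s < r"
  shows "continuous_on (sphere 0 r \<times> sphere 0 s) (\<lambda>p. \<phi> (snd p) / (fst p - snd p))"
proof -
  have "continuous_on (sphere 0 r \<times> sphere 0 s) (\<lambda>p. \<phi> (snd p))"
    by (rule continuous_on_compose2[OF assms(1) continuous_on_snd[OF continuous_on_id]]) auto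
  moreover have "fst p - snd p \<noteq> 0" if "p \<in> sphere 0 r \<times> sphere 0 s" for p :: "complex \<times> complex"
  proof -
    have "norm (fst p) = r" "norm (snd p) = s"
      using that by (auto simp: mem_Times_iff)
    with assms(2) show ?thesis
      by auto
  qed
  ultimately show ?thesis
    by (auto intro!: continuous_intros)
qed

lemma contour_integral_swap_linepath_circlepath:
  assumes "continuous_on (closed_segment a b \<times> sphere 0 r) (\<lambda>(x, y). f x y)" "0 < r"
  shows "contour_integral (linepath a b) (\<lambda>x. contour_integral (circlepath 0 r) (f x)) =
         contour_integral (circlepath 0 r) (\<lambda>y. contour_integral (linepath a b) (\<lambda>x. f x y))"
  by (rule contour_integral_swap)
    (use assms in \<open>auto simp: vector_derivative_circlepath intro!: continuous_intros\<close>)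

lemma contour_integral_swap_circlepaths:
  assumes "continuous_on (sphere 0 r \<times> sphere 0 s) (\<lambda>(x, y). f x y)" "0 < r" "0 < s"
  shows "contour_integral (circlepath 0 r) (\<lambda>x. contour_integral (circlepath 0 s) (f x)) =
         contour_integral (circlepath 0 s) (\<lambda>y. contour_integral (circlepath 0 r) (\<lambda>x. f x y))"
  by (rule contour_integral_swap)
    (use assms in \<open>auto simp: vector_derivative_circlepath intro!: continuous_intros\<close>)

lemma has_contour_integral_exp_linepath:
  assumes "c \<noteq> 0"
  shows "((\<lambda>\<tau>. exp (c * \<tau>)) has_contour_integral (exp (c * b) - exp (c * a)) / c) (linepath a b)"
proof -
  have "((\<lambda>\<tau>. exp (c * \<tau>) / c) has_field_derivative exp (c * \<tau>)) (at \<tau> within UNIV)" for \<tau>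
    using assms by (auto intro!: derivative_eq_intros)
  then have "((\<lambda>\<tau>. exp (c * \<tau>)) has_contour_integral exp (c * b) / c - exp (c * a) / c) (linepath a b)"
    using contour_integral_primitive[of UNIV "\<lambda>\<tau>. exp (c * \<tau>) / c" "\<lambda>\<tau>. exp (c * \<tau>)" "linepath a b"]
    by simp
  then show ?thesis
    by (simp add: diff_divide_distrib)
qed

lemma contour_integral_linepath_exp_convolution:
  assumes "z \<noteq> w"
  shows "contour_integral (linepath 0 b) (\<lambda>\<tau>. exp ((\<tau> - b) * w) * exp (- \<tau> * z)) =
           (exp (- b * w) - exp (- b * z)) / (z - w)"
proof -
  have "((\<lambda>\<tau>. exp (- b * w) * exp ((w - z) * \<tau>)) has_contour_integral
          exp (- b * w) * ((exp ((w - z) * b) - exp ((w - z) * 0)) / (w - z))) (linepath 0 b)"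
    using assms by (intro has_contour_integral_lmul has_contour_integral_exp_linepath) auto
  moreover have "(\<lambda>\<tau>. exp (- b * w) * exp ((w - z) * \<tau>)) = (\<lambda>\<tau>. exp ((\<tau> - b) * w) * exp (- \<tau> * z))"
    by (simp add: fun_eq_iff flip: exp_add) (simp add: algebra_simps)
  moreover have "exp (- b * w) * ((exp ((w - z) * b) - exp ((w - z) * 0)) / (w - z)) =
                   (exp (- b * w) - exp (- b * z)) / (z - w)"
    using assms by (simp add: divide_simps algebra_simps flip: exp_add)
  ultimately show ?thesis
    using contour_integral_unique by metis
qed

definition exp_dd_contour :: "real \<Rightarrow> complex list \<Rightarrow> complex \<Rightarrow> complex" where
  "exp_dd_contour r ys t = contour_integral (circlepath 0 r) (\<lambda>z. exp (t * z) / node_poly ys z)"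

lemma exp_dd_eq_exp_dd_contour:
  assumes "\<forall>y\<in>set ys. norm y < r" "0 < r"
  shows "exp_dd t ys = exp_dd_contour r ys (of_real t) / (2 * pi * \<i>)"
  using divdiff_eq_contour_integral_circlepath[OF _ assms, of "\<lambda>z. exp (of_real t * z)"]
  unfolding exp_dd_def exp_dd_contour_def by (simp add: holomorphic_intros)

lemma continuous_on_exp_dd_contour:
  assumes "\<forall>y\<in>set ys. norm y < r" "0 < r" "continuous_on S g"
  shows "continuous_on S (\<lambda>x. exp_dd_contour r ys (g x))"
proof -
  have "continuous_on UNIV (exp_dd_contour r ys)"
    unfolding exp_dd_contour_def using assms(1,2)
    by (intro continuous_on_contour_integral_circlepath) (auto simp: case_prod_unfold intro!: continuous_intros)
  then show ?thesis
    using continuous_on_compose2[OF _ assms(3)] by blast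
qed

lemma contour_integral_linepath_exp_dd_contour_times:
  assumes "\<forall>y\<in>set ys. norm y < r" "0 < r" "continuous_on UNIV g" "continuous_on UNIV \<psi>"
  shows "contour_integral (linepath a b) (\<lambda>\<tau>. exp_dd_contour r ys (g \<tau>) * \<psi> \<tau>) =
           contour_integral (circlepath 0 r)
             (\<lambda>z. contour_integral (linepath a b) (\<lambda>\<tau>. exp (g \<tau> * z) * \<psi> \<tau>) / node_poly ys z)"
proof -
  have on_circle: "node_poly ys z \<noteq> 0" if "z \<in> sphere 0 r" for z
    using assms(1) that by auto
  define F where "F = (\<lambda>\<tau> z. exp (g \<tau> * z) / node_poly ys z * \<psi> \<tau>)"
  have "continuous_on (UNIV \<times> sphere 0 r) (\<lambda>p. g (fst p))" "continuous_on (UNIV \<times> sphere 0 r) (\<lambda>p. \<psi> (fst p))"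
    by (rule continuous_on_compose2[OF _ continuous_on_fst[OF continuous_on_id]], use assms(3,4) in auto)+
  then have F_cont: "continuous_on (UNIV \<times> sphere 0 r) (\<lambda>(\<tau>, z). F \<tau> z)"
    unfolding F_def case_prod_unfold using on_circle by (auto intro!: continuous_intros)
  have "contour_integral (linepath a b) (\<lambda>\<tau>. exp_dd_contour r ys (g \<tau>) * \<psi> \<tau>) =
          contour_integral (linepath a b) (\<lambda>\<tau>. contour_integral (circlepath 0 r) (F \<tau>))"
  proof (rule contour_integral_eq)
    fix \<tau>
    have "(\<lambda>z. exp (g \<tau> * z) / node_poly ys z) contour_integrable_on circlepath 0 r"
      using on_circle assms(2) by (intro contour_integrable_continuous_circlepath) (auto intro!: continuous_intros)
    then show "exp_dd_contour r ys (g \<tau>) * \<psi> \<tau> = contour_integral (circlepath 0 r) (F \<tau>)"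
      unfolding F_def exp_dd_contour_def by (rule contour_integral_rmul[symmetric])
  qed
  also have "\<dots> = contour_integral (circlepath 0 r) (\<lambda>z. contour_integral (linepath a b) (\<lambda>\<tau>. F \<tau> z))"
    by (intro contour_integral_swap_linepath_circlepath continuous_on_subset[OF F_cont] assms(2)) auto
  also have "\<dots> = contour_integral (circlepath 0 r)
                    (\<lambda>z. contour_integral (linepath a b) (\<lambda>\<tau>. exp (g \<tau> * z) * \<psi> \<tau>) / node_poly ys z)"
  proof (rule contour_integral_eq)
    fix z
    have "(\<lambda>\<tau>. exp (g \<tau> * z) * \<psi> \<tau>) contour_integrable_on linepath a b"
      using assms(3,4) by (intro contour_integrable_continuous_linepath continuous_intros)
        (auto intro: continuous_on_subset)
    moreover have "(\<lambda>\<tau>. F \<tau> z) = (\<lambda>\<tau>. exp (g \<tau> * z) * \<psi> \<tau> / node_poly ys z)"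
      by (simp add: F_def fun_eq_iff)
    ultimately show "contour_integral (linepath a b) (\<lambda>\<tau>. F \<tau> z) =
                       contour_integral (linepath a b) (\<lambda>\<tau>. exp (g \<tau> * z) * \<psi> \<tau>) / node_poly ys z"
      by (simp only: contour_integral_div)
  qed
  finally show ?thesis .
qed

lemma contour_integral_linepath_exp_times_exp_dd_contour:
  assumes "ys \<noteq> []" "\<forall>y\<in>set ys. norm y < r" "r < norm z"
  shows "contour_integral (linepath 0 b) (\<lambda>\<tau>. exp (- \<tau> * z) * exp_dd_contour r ys (\<tau> - b)) =
           contour_integral (circlepath 0 r) (\<lambda>w. exp (- b * w) / node_poly ys w / (z - w))
           - 2 * pi * \<i> * exp (- b * z) / node_poly ys z"
proof -
  have "0 < r"
    using assms(1,2) by (cases ys) (auto intro: le_less_trans[OF norm_ge_zero])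
  have on_circle: "node_poly ys w \<noteq> 0" "z \<noteq> w" if "w \<in> sphere 0 r" for w
    using assms(2,3) that by auto
  have "contour_integral (linepath 0 b) (\<lambda>\<tau>. exp (- \<tau> * z) * exp_dd_contour r ys (\<tau> - b)) =
          contour_integral (linepath 0 b) (\<lambda>\<tau>. exp_dd_contour r ys (\<tau> - b) * exp (- \<tau> * z))"
    by (simp only: mult.commute)
  also have "\<dots> = contour_integral (circlepath 0 r) (\<lambda>w.
      contour_integral (linepath 0 b) (\<lambda>\<tau>. exp ((\<tau> - b) * w) * exp (- \<tau> * z)) / node_poly ys w)"
    using assms(2) \<open>0 < r\<close>
    by (intro contour_integral_linepath_exp_dd_contour_times continuous_intros)
  also have "\<dots> = contour_integral (circlepath 0 r)
                    (\<lambda>w. exp (- b * w) / node_poly ys w / (z - w) - exp (- b * z) * (1 / ((z - w) * node_poly ys w)))"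
  proof (rule contour_integral_eq)
    fix w assume "w \<in> path_image (circlepath 0 r)"
    then have "z \<noteq> w"
      using on_circle \<open>0 < r\<close> by auto
    then show "contour_integral (linepath 0 b) (\<lambda>\<tau>. exp ((\<tau> - b) * w) * exp (- \<tau> * z)) / node_poly ys w =
                 exp (- b * w) / node_poly ys w / (z - w) - exp (- b * z) * (1 / ((z - w) * node_poly ys w))"
      unfolding contour_integral_linepath_exp_convolution[OF \<open>z \<noteq> w\<close>] by (simp add: diff_divide_distrib)
  qed
  also have "\<dots> = contour_integral (circlepath 0 r) (\<lambda>w. exp (- b * w) / node_poly ys w / (z - w))
                   - exp (- b * z) * contour_integral (circlepath 0 r) (\<lambda>w. 1 / ((z - w) * node_poly ys w))"
  proof -
    have "(\<lambda>w. exp (- b * w) / node_poly ys w / (z - w)) contour_integrable_on circlepath 0 r"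
      and integrable: "(\<lambda>w. 1 / ((z - w) * node_poly ys w)) contour_integrable_on circlepath 0 r"
      using on_circle \<open>0 < r\<close> by (auto intro!: contour_integrable_continuous_circlepath continuous_intros)
    then show ?thesis
      by (simp only: contour_integral_diff contour_integrable_lmul contour_integral_lmul[OF integrable])
  qed
  finally show ?thesis
    using contour_integral_circlepath_inverse_node_poly_outside[OF assms] by simp
qed

lemma contour_integral_cauchy_transform_div_node_poly_eq_0:
  fixes \<phi> :: "complex \<Rightarrow> complex"
  assumes "continuous_on (sphere 0 s) \<phi>" "ys \<noteq> []" "\<forall>y\<in>set ys. norm y < r" "0 < s" "s < r"
  shows "contour_integral (circlepath 0 r)
           (\<lambda>z. contour_integral (circlepath 0 s) (\<lambda>w. \<phi> w / (z - w)) / node_poly ys z) = 0"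
proof -
  have "0 < r"
    using assms(4,5) by linarith
  define H where "H = (\<lambda>z w. \<phi> w / (z - w) / node_poly ys z)"
  have H_cont: "continuous_on (sphere 0 r \<times> sphere 0 s) (\<lambda>(z, w). H z w)"
    unfolding H_def case_prod_unfold using assms(3)
    by (intro continuous_on_divide[OF continuous_on_cauchy_kernel_spheres[OF assms(1,5)]] continuous_intros)
      (auto simp: mem_Times_iff)
  have "contour_integral (circlepath 0 r)
          (\<lambda>z. contour_integral (circlepath 0 s) (\<lambda>w. \<phi> w / (z - w)) / node_poly ys z) =
        contour_integral (circlepath 0 r) (\<lambda>z. contour_integral (circlepath 0 s) (H z))"
  proof (rule contour_integral_eq)
    fix z assume "z \<in> path_image (circlepath 0 r)"
    then have "continuous_on (sphere 0 s) (\<lambda>w. \<phi> w / (z - w))"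
      using assms(1,5) \<open>0 < r\<close> by (auto intro!: continuous_intros)
    then show "contour_integral (circlepath 0 s) (\<lambda>w. \<phi> w / (z - w)) / node_poly ys z =
                 contour_integral (circlepath 0 s) (H z)"
      unfolding H_def
      by (intro contour_integral_div[symmetric] contour_integrable_continuous_circlepath) (use assms(4) in simp)
  qed
  also have "\<dots> = contour_integral (circlepath 0 s) (\<lambda>w. contour_integral (circlepath 0 r) (\<lambda>z. H z w))"
    by (rule contour_integral_swap_circlepaths[OF H_cont \<open>0 < r\<close> assms(4)])
  also have "\<dots> = contour_integral (circlepath 0 s) (\<lambda>w. 0)"
  proof (rule contour_integral_eq)
    fix w assume "w \<in> path_image (circlepath 0 s)"
    then have nodes: "\<forall>y\<in>set (w # ys). norm y < r"
      using assms(3,4,5) by auto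
    have "(\<lambda>z. H z w) = (\<lambda>z. \<phi> w * (1 / node_poly (w # ys) z))"
      by (simp add: H_def fun_eq_iff divide_simps)
    moreover have "(\<lambda>z. 1 / node_poly (w # ys) z) contour_integrable_on circlepath 0 r"
      using nodes \<open>0 < r\<close> by (intro contour_integrable_continuous_circlepath continuous_intros) auto
    moreover have "contour_integral (circlepath 0 r) (\<lambda>z. 1 / node_poly (w # ys) z) = 0"
      using assms(2) nodes by (intro contour_integral_inverse_node_poly_eq_0) (cases ys, auto)
    ultimately show "contour_integral (circlepath 0 r) (\<lambda>z. H z w) = 0"
      by (simp only: contour_integral_lmul mult_zero_right)
  qed
  finally show ?thesis
    by simp
qed

lemma contour_integral_exp_dd_contour_convolution:
  assumes "ys \<noteq> []" "zs \<noteq> []" "\<forall>y\<in>set ys. norm y < r" "\<forall>y\<in>set zs. norm y < s" "0 < s" "s < r"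
  shows "contour_integral (linepath 0 b) (\<lambda>\<tau>. exp_dd_contour r ys (- \<tau>) * exp_dd_contour s zs (\<tau> - b)) =
           - (2 * pi * \<i> * exp_dd_contour r (zs @ ys) (- b))"
proof -
  have "0 < r"
    using assms(5,6) by linarith
  have on_circle: "node_poly ys z \<noteq> 0" "node_poly zs z \<noteq> 0" "s < norm z" if "z \<in> sphere 0 r" for z
    using assms(3,4,6) that by auto
  define \<phi> where "\<phi> = (\<lambda>w. exp (- b * w) / node_poly zs w)"
  define J where "J = (\<lambda>z. contour_integral (circlepath 0 s) (\<lambda>w. \<phi> w / (z - w)))"
  have \<phi>_cont: "continuous_on (sphere 0 s) \<phi>"
    unfolding \<phi>_def using assms(4) by (auto intro!: continuous_intros)
  have J_cont: "continuous_on (sphere 0 r) J"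
    unfolding J_def using continuous_on_cauchy_kernel_spheres[OF \<phi>_cont assms(6)] assms(5)
    by (intro continuous_on_contour_integral_circlepath) (auto simp: case_prod_unfold)
  have "contour_integral (linepath 0 b) (\<lambda>\<tau>. exp_dd_contour r ys (- \<tau>) * exp_dd_contour s zs (\<tau> - b)) =
      contour_integral (circlepath 0 r) (\<lambda>z.
        contour_integral (linepath 0 b) (\<lambda>\<tau>. exp (- \<tau> * z) * exp_dd_contour s zs (\<tau> - b)) / node_poly ys z)"
    using assms \<open>0 < r\<close>
    by (intro contour_integral_linepath_exp_dd_contour_times continuous_on_exp_dd_contour continuous_intros) auto
  also have "\<dots> = contour_integral (circlepath 0 r)
                    (\<lambda>z. J z / node_poly ys z - 2 * pi * \<i> * (exp (- b * z) / node_poly (zs @ ys) z))"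
  proof (rule contour_integral_eq)
    fix z assume "z \<in> path_image (circlepath 0 r)"
    then have z: "node_poly ys z \<noteq> 0" "node_poly zs z \<noteq> 0" "s < norm z"
      using on_circle \<open>0 < r\<close> by auto
    then show "contour_integral (linepath 0 b) (\<lambda>\<tau>. exp (- \<tau> * z) * exp_dd_contour s zs (\<tau> - b)) / node_poly ys z =
                 J z / node_poly ys z - 2 * pi * \<i> * (exp (- b * z) / node_poly (zs @ ys) z)"
      unfolding contour_integral_linepath_exp_times_exp_dd_contour[OF assms(2,4) z(3)] J_def \<phi>_def
      by (simp add: node_poly_append field_simps)
  qed
  also have "\<dots> = contour_integral (circlepath 0 r) (\<lambda>z. J z / node_poly ys z)
                   - 2 * pi * \<i> * exp_dd_contour r (zs @ ys) (- b)"
  proof -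
    have "(\<lambda>z. J z / node_poly ys z) contour_integrable_on circlepath 0 r"
      and integrable: "(\<lambda>z. exp (- b * z) / node_poly (zs @ ys) z) contour_integrable_on circlepath 0 r"
      using on_circle \<open>0 < r\<close> J_cont
      by (auto simp: node_poly_append intro!: contour_integrable_continuous_circlepath continuous_intros)
    then show ?thesis
      unfolding exp_dd_contour_def
      by (simp only: contour_integral_diff contour_integrable_lmul contour_integral_lmul[OF integrable])
  qed
  also have "contour_integral (circlepath 0 r) (\<lambda>z. J z / node_poly ys z) = 0"
    unfolding J_def by (rule contour_integral_cauchy_transform_div_node_poly_eq_0[OF \<phi>_cont assms(1,3,5,6)])
  finally show ?thesis
    by (simp only: diff_0)
qed

lemma exp_dd_convolution_has_integral:
  assumes "ys \<noteq> []" "zs \<noteq> []" "0 < \<beta>"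
  shows "((\<lambda>\<tau>. exp_dd (- \<tau>) ys * exp_dd (- (\<beta> - \<tau>)) zs) has_integral - exp_dd (- \<beta>) (zs @ ys)) {0..\<beta>}"
proof -
  obtain s where "0 < s" "\<forall>y\<in>set (zs @ ys). norm y < s"
    using bounded_pos_less[THEN iffD1, OF finite_imp_bounded[OF finite_set]] by blast
  then have s: "0 < s" "\<forall>y\<in>set ys. norm y < s + 1" "\<forall>y\<in>set zs. norm y < s" "\<forall>y\<in>set (zs @ ys). norm y < s + 1"
    by (auto simp: ball_Un)
  define F where "F = (\<lambda>\<tau>. exp_dd_contour (s + 1) ys (- \<tau>) * exp_dd_contour s zs (\<tau> - of_real \<beta>))"
  define E where "E = exp_dd_contour (s + 1) (zs @ ys) (- of_real \<beta>)"
  have "F contour_integrable_on linepath 0 (of_real \<beta>)"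
    unfolding F_def using s by (intro contour_integrable_continuous_linepath continuous_intros continuous_on_exp_dd_contour) auto
  moreover have "contour_integral (linepath 0 (of_real \<beta>)) F = - (2 * pi * \<i> * E)"
    unfolding F_def E_def using assms(1,2) s by (intro contour_integral_exp_dd_contour_convolution) auto
  ultimately have "((\<lambda>\<tau>. F \<tau> / (2 * pi * \<i>)\<^sup>2) has_contour_integral - (2 * pi * \<i> * E) / (2 * pi * \<i>)\<^sup>2)
                     (linepath 0 (of_real \<beta>))"
    using has_contour_integral_div[OF has_contour_integral_integral] by metis
  moreover have "- (2 * pi * \<i> * E) / (2 * pi * \<i>)\<^sup>2 = - (E / (2 * pi * \<i>))"
    by (simp add: power2_eq_square)
  ultimately have "((\<lambda>\<tau>. F (of_real \<tau>) / (2 * pi * \<i>)\<^sup>2) has_integral - (E / (2 * pi * \<i>))) {0..\<beta>}"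
    using has_contour_integral_linepath_Reals_iff[of 0 "of_real \<beta>"] assms(3) by simp
  moreover have "exp_dd (- \<tau>) ys * exp_dd (- (\<beta> - \<tau>)) zs = F (of_real \<tau>) / (2 * pi * \<i>)\<^sup>2" for \<tau>
    using s by (simp add: F_def exp_dd_eq_exp_dd_contour[of ys "s + 1"] exp_dd_eq_exp_dd_contour[of zs s] power2_eq_square)
  moreover have "exp_dd (- \<beta>) (zs @ ys) = E / (2 * pi * \<i>)"
    using s by (simp add: E_def exp_dd_eq_exp_dd_contour[of "zs @ ys" "s + 1"])
  ultimately show ?thesis
    by simp
qed

theorem lemma1:
  fixes xs :: "complex list" and q j :: nat and \<beta> :: real
  assumes "length xs = q + 1" and "q \<ge> 1" and "j \<le> q - 1" and "\<beta> > 0"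
  shows "((\<lambda>\<tau>. exp_dd (-\<tau>) (drop (j+1) xs) * exp_dd (-(\<beta> - \<tau>)) (take (j+1) xs))
           has_integral (- exp_dd (-\<beta>) xs)) {0..\<beta>}"
proof -
  have "drop (j + 1) xs \<noteq> []" "take (j + 1) xs \<noteq> []"
    using assms(1-3) by auto
  from exp_dd_convolution_has_integral[OF this assms(4)] show ?thesis
    by simp
qed

end
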